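(* In a finite dynamic game as described in the context, suppose $K^i$ is unilaterally sufficient information for player $i$, with associated functions $F_t^{i,g^i}$. Let $g=(g^j)_{j\in\mathcal{I}}$ be a fully mixed behavioral strategy profile and let $\rho^i$ be the $K^i$-based strategy $$\rho_t^i(u_t^i\mid k_t^i)=\sum_{\tilde h_t^i}g_t^i(u_t^i\mid\tilde h_t^i)\,F_t^{i,g^i}(\tilde h_t^i\mid k_t^i).$$ Then for every $j\in\mathcal{I}\setminus\{i\}$ and all $h_t^j\in\mathcal{H}_t^j$, $u_t^j\in\mathcal{U}_t^j$ (for which the conditional quantities are defined): (1) $\Pr^g(\tilde h_{t+1}^j\mid h_t^j,u_t^j)=\Pr^{\rho^i,g^{-i}}(\tilde h_{t+1}^j\mid h_t^j,u_t^j)$ for all $t<T$ and all $\tilde h_{t+1}^j$; and (2) $\mathbb{E}^g[R_t^j\mid h_t^j,u_t^j]=\mathbb{E}^{\rho^i,g^{-i}}[R_t^j\mid h_t^j,u_t^j]$ for all $t$.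
   Context: Game model: finite set of players $\mathcal{I}$, times $\mathcal{T}=\{1,\dots,T\}$. At time $t$ each player $i$ takes action $U_t^i\in\mathcal{U}_t^i$, obtains reward $R_t^i\in[-1,1]$ and learns new information $Z_t^i\in\mathcal{Z}_t^i$. There is a state $X_t\in\mathcal{X}_t$ with $(X_{t+1},Z_t,R_t)=f_t(X_t,U_t,W_t)$ for fixed functions $f_t$. Primitive random variables $(X_1,H_1)$ and $W_1,\dots,W_T$ are mutually independent with commonly known distributions. All sets are finite. Perfect recall: $H_t^i=(H_1^i,Z_{1:t-1}^i)\in\mathcal{H}_t^i$, and $U_t^i$ is a component of $Z_t^i$. Behavioral strategy $g_t^i:\mathcal{H}_t^i\to\Delta(\mathcal{U}_t^i)$; a profile is fully mixed if every action has positive probability at every history. A realization is admissible under $g$ if it has positive probability under $g$. Compression: $K_1^i=\iota_1^i(H_1^i)$, $K_t^i=\iota_t^i(K_{t-1}^i,Z_{t-1}^i)$ for fixed maps, finite value sets $\mathcal{K}_t^i$; $k_t^i$ is the compression of $h_t^i$; a $K^i$-based strategy has $\rho_t^i:\mathcal{K}_t^i\to\Delta(\mathcal{U}_t^i)$. Unilaterally sufficient information (USI): $K^i$ is USI for player $i$ if there exist $F_t^{i,g^i}:\mathcal{K}_t^i\to\Delta(\mathcal{H}_t^i)$ depending only on $g^i$ and $\Phi_t^{i,g^{-i}}:\mathcal{K}_t^i\to\Delta(\mathcal{X}_t\times\mathcal{H}_t^{-i})$ depending only on $g^{-i}$ with $\Pr^g(x_t,h_t\mid k_t^i)=F_t^{i,g^i}(h_t^i\mid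 k_t^i)\Phi_t^{i,g^{-i}}(x_t,h_t^{-i}\mid k_t^i)$ for all behavioral profiles $g$, all $t$, all $k_t^i$ admissible under $g$ (with $x_t,h_t^i,h_t^{-i}$ ranging independently; the left side is $0$ if they disagree on shared components). *)

theory Defs
  imports "HOL-Probability.Probability"
begin

text \<open>
  Time steps are 1..T.
  A history of player i at time t is (H_1^i, [Z_1^i,...,Z_{t-1}^i]).
  The game dynamics f t x u w = (X_{t+1}, Z_t, R_t).
  P1 is the joint distribution of (X_1, H_1); W t is the distribution of W_t;
  primitive random variables are independent by construction of the trajectory distribution.
\<close>

type_synonym ('h1, 'z) hist = "'h1 \<times> 'z list"

definition Hset :: "nat \<Rightarrow> ('h1, 'z) hist set" where
  "Hset t = {h. length (snd h) = t - 1}"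

definition step ::
  "(nat \<Rightarrow> 'x \<Rightarrow> ('i::finite \<Rightarrow> 'u) \<Rightarrow> 'w \<Rightarrow> 'x \<times> ('i \<Rightarrow> 'z) \<times> ('i \<Rightarrow> real))
   \<Rightarrow> (nat \<Rightarrow> 'w pmf)
   \<Rightarrow> ('i \<Rightarrow> nat \<Rightarrow> ('h1, 'z) hist \<Rightarrow> 'u pmf)
   \<Rightarrow> nat \<Rightarrow> 'x \<times> ('i \<Rightarrow> ('h1, 'z) hist)
   \<Rightarrow> ('x \<times> ('i \<Rightarrow> ('h1, 'z) hist) \<times> ('i \<Rightarrow> 'u) \<times> ('i \<Rightarrow> real) \<times> 'x \<times> ('i \<Rightarrow> ('h1, 'z) hist)) pmf"
  where
  "step f W g t c =
     (case c of (x, h) \<Rightarrow>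
       bind_pmf (Pi_pmf UNIV undefined (\<lambda>i. g i t (h i))) (\<lambda>u.
       bind_pmf (W t) (\<lambda>w.
         (case f t x u w of (x', z, r) \<Rightarrow>
            return_pmf (x, h, u, r, x', \<lambda>i. (fst (h i), snd (h i) @ [z i]))))))"

text \<open>Distribution of the configuration (X_{n+1}, H_{n+1}) under profile g.\<close>
fun cfg ::
  "('x \<times> ('i::finite \<Rightarrow> 'h1)) pmf
   \<Rightarrow> (nat \<Rightarrow> 'x \<Rightarrow> ('i \<Rightarrow> 'u) \<Rightarrow> 'w \<Rightarrow> 'x \<times> ('i \<Rightarrow> 'z) \<times> ('i \<Rightarrow> real))
   \<Rightarrow> (nat \<Rightarrow> 'w pmf)
   \<Rightarrow> ('i \<Rightarrow> nat \<Rightarrow> ('h1, 'z) hist \<Rightarrow> 'u pmf)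
   \<Rightarrow> nat \<Rightarrow> ('x \<times> ('i \<Rightarrow> ('h1, 'z) hist)) pmf" where
  "cfg P1 f W g 0 = map_pmf (\<lambda>(x, h1). (x, \<lambda>i. (h1 i, []))) P1"
| "cfg P1 f W g (Suc n) =
     map_pmf (\<lambda>(x, h, u, r, x', h'). (x', h')) (bind_pmf (cfg P1 f W g n) (step f W g (Suc n)))"

definition config where
  "config P1 f W g t = cfg P1 f W g (t - 1)"

definition stepd where
  "stepd P1 f W g t = bind_pmf (config P1 f W g t) (step f W g t)"

definition behavioral ::
  "('i \<Rightarrow> nat \<Rightarrow> 'u set) \<Rightarrow> nat \<Rightarrow> ('i \<Rightarrow> nat \<Rightarrow> ('h1, 'z) hist \<Rightarrow> 'u pmf) \<Rightarrow> bool" where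
  "behavioral Uset T g \<longleftrightarrow>
     (\<forall>i t h. t \<in> {1..T} \<longrightarrow> h \<in> Hset t \<longrightarrow> set_pmf (g i t h) \<subseteq> Uset i t)"

definition fully_mixed ::
  "('i \<Rightarrow> nat \<Rightarrow> 'u set) \<Rightarrow> nat \<Rightarrow> ('i \<Rightarrow> nat \<Rightarrow> ('h1, 'z) hist \<Rightarrow> 'u pmf) \<Rightarrow> bool" where
  "fully_mixed Uset T g \<longleftrightarrow> behavioral Uset T g \<and>
     (\<forall>i t h u. t \<in> {1..T} \<longrightarrow> h \<in> Hset t \<longrightarrow> u \<in> Uset i t \<longrightarrow> pmf (g i t h) u > 0)"

text \<open>Compression: K_1 = iota1 H_1, K_{s+1} = iota (s+1) K_s Z_s.\<close>
definition compress ::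
  "('i \<Rightarrow> 'h1 \<Rightarrow> 'k) \<Rightarrow> ('i \<Rightarrow> nat \<Rightarrow> 'k \<Rightarrow> 'z \<Rightarrow> 'k) \<Rightarrow> 'i \<Rightarrow> ('h1, 'z) hist \<Rightarrow> 'k" where
  "compress iota1 iota i h =
     foldl (\<lambda>k (s, z). iota i (s + 1) k z) (iota1 i (fst h)) (zip [1..<length (snd h) + 1] (snd h))"

text \<open>Unilaterally sufficient information for player i, with witnesses F (a function of g^i)
  and Phi (a function of g^{-i}, i.e. of the profile restricted to the other players).\<close>
definition USI ::
  "('x \<times> ('i::finite \<Rightarrow> 'h1)) pmf
   \<Rightarrow> (nat \<Rightarrow> 'x \<Rightarrow> ('i \<Rightarrow> 'u) \<Rightarrow> 'w \<Rightarrow> 'x \<times> ('i \<Rightarrow> 'z) \<times> ('i \<Rightarrow> real))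
   \<Rightarrow> (nat \<Rightarrow> 'w pmf) \<Rightarrow> ('i \<Rightarrow> nat \<Rightarrow> 'u set) \<Rightarrow> nat
   \<Rightarrow> ('i \<Rightarrow> 'h1 \<Rightarrow> 'k) \<Rightarrow> ('i \<Rightarrow> nat \<Rightarrow> 'k \<Rightarrow> 'z \<Rightarrow> 'k) \<Rightarrow> 'i
   \<Rightarrow> ((nat \<Rightarrow> ('h1, 'z) hist \<Rightarrow> 'u pmf) \<Rightarrow> nat \<Rightarrow> 'k \<Rightarrow> ('h1, 'z) hist pmf)
   \<Rightarrow> (('i \<Rightarrow> nat \<Rightarrow> ('h1, 'z) hist \<Rightarrow> 'u pmf) \<Rightarrow> nat \<Rightarrow> 'k \<Rightarrow> ('x \<times> ('i \<Rightarrow> ('h1, 'z) hist)) pmf)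
   \<Rightarrow> bool" where
  "USI P1 f W Uset T iota1 iota i F Phi \<longleftrightarrow>
     (\<forall>g. behavioral Uset T g \<longrightarrow>
       (\<forall>t \<in> {1..T}. \<forall>k.
          set_pmf (config P1 f W g t) \<inter> {c. compress iota1 iota i (snd c i) = k} \<noteq> {} \<longrightarrow>
          (\<forall>x h. pmf (cond_pmf (config P1 f W g t) {c. compress iota1 iota i (snd c i) = k}) (x, h)
                 = pmf (F (g i) t k) (h i) * pmf (Phi (restrict g (- {i})) t k) (x, restrict h (- {i})))))"

end

theory Submission
  imports Defs
begin

text \<open>
  Call the view of a configuration (x, h) the triple of the state, the histories of the
  players other than i, and the compression k of player i's history. Unilateral sufficiency
  says that, conditionally on the view, player i's history is distributed according to
  F(k) independently of everything else; hence under g player i's action given the view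
  has law \<Sum>h. g(u | h) F(h | k) = \<rho>(u | k), and the joint law of the view and the action
  profile is the same under g and under the profile in which i plays \<rho>. Since the
  compression is updated recursively, the next view is a function of the current view, the actions and the noise,
  so by induction on time the views of every step have the same law under both profiles.
  Everything player j \<noteq> i conditions on and is rewarded with is a function of the view.
\<close>

lemma pmf_map_Pair:
  "pmf (map_pmf (Pair a) q) (b, y) = (if a = b then pmf q y else 0)"
proof (cases "a = b")
  case True
  then show ?thesis using pmf_map_inj'[of "Pair a" q y] by (simp add: inj_on_def)
qed (auto simp: pmf_eq_0_set_pmf)

lemma pmf_bind_map_Pair:
  "pmf (bind_pmf M (\<lambda>p. map_pmf (Pair p) (K p))) (p, y) = pmf M p * pmf (K p) y"
proof -
  have "ennreal (pmf (bind_pmf M (\<lambda>p. map_pmf (Pair p) (K p))) (p, y))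
      = (\<integral>\<^sup>+p'. ennreal (pmf (K p) y) * indicator {p} p' \<partial>M)"
    unfolding ennreal_pmf_bind by (intro nn_integral_cong) (simp add: pmf_map_Pair)
  also have "\<dots> = ennreal (pmf M p * pmf (K p) y)"
    by (simp add: emeasure_pmf_single ennreal_mult' mult.commute)
  finally show ?thesis by simp
qed

lemma eq_bind_marginal_if_pmf_factors:
  assumes factors: "\<And>p y. pmf D (p, y) = a p * pmf (K p) y"
  shows "D = bind_pmf (map_pmf fst D) (\<lambda>p. map_pmf (Pair p) (K p))"
proof (rule pmf_eqI, clarify)
  fix p y
  have "pmf (map_pmf fst D) p = infsetsum (pmf D) (fst -` {p})"
    by (simp add: pmf_map measure_pmf_conv_infsetsum)
  also have "\<dots> = infsetsum (pmf D) (range (Pair p))"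
    by (rule arg_cong[where f = "infsetsum (pmf D)"]) force
  also have "\<dots> = infsetsum (\<lambda>y. a p * pmf (K p) y) UNIV"
    by (subst infsetsum_reindex) (auto simp: inj_on_def factors)
  also have "\<dots> = a p"
    by (simp add: infsetsum_cmult_right[OF pmf_abs_summable] infsetsum_pmf_eq_1)
  finally show "pmf D (p, y) = pmf (bind_pmf (map_pmf fst D) (\<lambda>p. map_pmf (Pair p) (K p))) (p, y)"
    by (simp add: pmf_bind_map_Pair factors)
qed

lemma prob_times_pmf_cond:
  "measure_pmf.prob p A * pmf (cond_pmf p A) z = (if z \<in> A then pmf p z else 0)"
proof (cases "set_pmf p \<inter> A = {}")
  case True
  then have "measure_pmf.prob p A = 0" and "z \<in> A \<Longrightarrow> pmf p z = 0"
    by (auto simp: measure_pmf_zero_iff set_pmf_eq)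
  then show ?thesis by simp
next
  case False
  then have "measure_pmf.prob p A > 0"
    by (auto intro: measure_pmf_posI)
  then show ?thesis by (simp add: pmf_cond[OF False])
qed

definition view_cfg :: "'i \<Rightarrow> ('h \<Rightarrow> 'k) \<Rightarrow> 'x \<times> ('i \<Rightarrow> 'h) \<Rightarrow> 'x \<times> ('i \<Rightarrow> 'h) \<times> 'k" where
  "view_cfg i \<kappa> c = (fst c, restrict (snd c) (- {i}), \<kappa> (snd c i))"

lemma map_pmf_view_cfg_hist:
  fixes C :: "('x \<times> ('i \<Rightarrow> 'h)) pmf" and \<kappa> :: "'h \<Rightarrow> 'k"
  assumes usi: "\<And>k x h. set_pmf C \<inter> {c. \<kappa> (snd c i) = k} \<noteq> {} \<Longrightarrow>
      pmf (cond_pmf C {c. \<kappa> (snd c i) = k}) (x, h) = pmf (Fk k) (h i) * pmf (Ph k) (x, restrict h (- {i}))"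
  shows "map_pmf (\<lambda>c. (view_cfg i \<kappa> c, snd c i)) C
    = bind_pmf (map_pmf (view_cfg i \<kappa>) C) (\<lambda>p. map_pmf (Pair p) (Fk (snd (snd p))))"
proof -
  define P where "P k = measure_pmf.prob C {c. \<kappa> (snd c i) = k}" for k
  have factor: "P k * (pmf (Fk k) (h i) * pmf (Ph k) (x, restrict h (- {i})))
      = (if \<kappa> (h i) = k then pmf C (x, h) else 0)" for k x h
  proof -
    have "P k * (pmf (Fk k) (h i) * pmf (Ph k) (x, restrict h (- {i})))
        = P k * pmf (cond_pmf C {c. \<kappa> (snd c i) = k}) (x, h)"
      using usi[of k x h] by (cases "set_pmf C \<inter> {c. \<kappa> (snd c i) = k} = {}")
        (auto simp: P_def measure_pmf_zero_iff)
    also have "\<dots> = (if \<kappa> (h i) = k then pmf C (x, h) else 0)"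
      unfolding P_def by (simp add: prob_times_pmf_cond)
    finally show ?thesis .
  qed
  define a where "a = (\<lambda>(x, hr, k). if hr i = undefined then P k * pmf (Ph k) (x, hr) else 0)"
  have "pmf (map_pmf (\<lambda>c. (view_cfg i \<kappa> c, snd c i)) C) (p, hi) = a p * pmf (Fk (snd (snd p))) hi" for p hi
  proof -
    obtain x hr k where p: "p = (x, hr, k)" by (cases p)
    have restrict_hr: "restrict hr (- {i}) = hr" if "hr i = undefined"
      using that by (auto simp: restrict_def)
    show ?thesis
    proof (cases "hr i = undefined \<and> \<kappa> hi = k")
      case True
      have "inj (\<lambda>c. (view_cfg i \<kappa> c, snd c i))"
        by (rule injI) (auto simp: view_cfg_def restrict_def fun_eq_iff prod_eq_iff split: if_splits)
      then have "pmf (map_pmf (\<lambda>c. (view_cfg i \<kappa> c, snd c i)) C) (p, hi) = pmf C (x, hr(i := hi))"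
        using True pmf_map_inj'[of "\<lambda>c. (view_cfg i \<kappa> c, snd c i)" C "(x, hr(i := hi))"]
        by (simp add: p view_cfg_def restrict_hr)
      also have "\<dots> = a p * pmf (Fk k) hi"
        using True factor[of k "hr(i := hi)" x] restrict_hr
        by (simp add: p a_def mult_ac)
      finally show ?thesis by (simp add: p)
    next
      case False
      then have "pmf (map_pmf (\<lambda>c. (view_cfg i \<kappa> c, snd c i)) C) (p, hi) = 0"
        by (intro pmf_map_outside) (auto simp: p view_cfg_def)
      moreover have "a p * pmf (Fk k) hi = 0"
        using False factor[of k "hr(i := hi)" x] restrict_hr by (auto simp: p a_def)
      ultimately show ?thesis by (simp add: p)
    qed
  qed
  from eq_bind_marginal_if_pmf_factors[OF this] show ?thesis
    by (simp add: map_pmf_comp)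
qed

lemma Pi_pmf_UNIV_split:
  "Pi_pmf (UNIV :: 'i::finite set) d D = bind_pmf (D i) (\<lambda>y. map_pmf (\<lambda>f. f(i := y)) (Pi_pmf (- {i}) d D))"
proof -
  have "UNIV = insert i (- {i})"
    by auto
  then show ?thesis
    using Pi_pmf_insert'[of "- {i}" i d D] by (simp add: map_pmf_def)
qed

lemma joint_view_actions_eq:
  fixes Ca Cb :: "('x \<times> ('i::finite \<Rightarrow> 'h)) pmf" and \<kappa> :: "'h \<Rightarrow> 'k"
  assumes usi: "\<And>k x h. set_pmf Ca \<inter> {c. \<kappa> (snd c i) = k} \<noteq> {} \<Longrightarrow>
      pmf (cond_pmf Ca {c. \<kappa> (snd c i) = k}) (x, h) = pmf (Fk k) (h i) * pmf (Ph k) (x, restrict h (- {i}))"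
    and R: "\<And>k. R k = bind_pmf (Fk k) (G i)"
    and views: "map_pmf (view_cfg i \<kappa>) Ca = map_pmf (view_cfg i \<kappa>) Cb"
  shows "bind_pmf Ca (\<lambda>c. map_pmf (Pair (view_cfg i \<kappa> c)) (Pi_pmf UNIV undefined (\<lambda>l. G l (snd c l))))
    = bind_pmf Cb (\<lambda>c. map_pmf (Pair (view_cfg i \<kappa> c))
        (Pi_pmf UNIV undefined (\<lambda>l. (G(i := R \<circ> \<kappa>)) l (snd c l))))"
proof -
  define N where "N p y = map_pmf (\<lambda>f. f(i := y)) (Pi_pmf (- {i}) undefined (\<lambda>l. G l (fst (snd p) l)))"
    for p :: "'x \<times> ('i \<Rightarrow> 'h) \<times> 'k" and y
  have split: "Pi_pmf UNIV undefined (\<lambda>l. G' l (snd c l))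
      = bind_pmf (G' i (snd c i)) (N (view_cfg i \<kappa> c))" if "\<And>l. l \<noteq> i \<Longrightarrow> G' l = G l" for G' c
    unfolding Pi_pmf_UNIV_split[of _ _ i] N_def view_cfg_def
    using that by (intro bind_pmf_cong map_pmf_cong Pi_pmf_cong) auto
  have "bind_pmf Ca (\<lambda>c. map_pmf (Pair (view_cfg i \<kappa> c)) (Pi_pmf UNIV undefined (\<lambda>l. G l (snd c l))))
      = bind_pmf (map_pmf (\<lambda>c. (view_cfg i \<kappa> c, snd c i)) Ca)
          (\<lambda>(p, hi). map_pmf (Pair p) (bind_pmf (G i hi) (N p)))"
    by (simp add: bind_map_pmf split)
  also have "\<dots> = bind_pmf (map_pmf (view_cfg i \<kappa>) Ca)
      (\<lambda>p. map_pmf (Pair p) (bind_pmf (R (snd (snd p))) (N p)))"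
    by (simp add: map_pmf_view_cfg_hist[OF usi] bind_assoc_pmf bind_map_pmf map_bind_pmf R)
  also have "\<dots> = bind_pmf Cb (\<lambda>c. map_pmf (Pair (view_cfg i \<kappa> c))
      (Pi_pmf UNIV undefined (\<lambda>l. (G(i := R \<circ> \<kappa>)) l (snd c l))))"
    using split[of "G(i := R \<circ> \<kappa>)"] by (simp add: views bind_map_pmf view_cfg_def)
  finally show ?thesis .
qed

lemma set_pmf_step_hist:
  assumes "\<omega> \<in> set_pmf (step f W g t (x, h))"
  shows "\<exists>z. snd (snd (snd (snd (snd \<omega>)))) = (\<lambda>l. (fst (h l), snd (h l) @ [z l]))"
proof -
  from assms obtain u w where "\<omega> \<in> set_pmf (case f t x u w of (x', z, r) \<Rightarrow>
      return_pmf (x, h, u, r, x', \<lambda>l. (fst (h l), snd (h l) @ [z l])))"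
    by (auto simp: step_def)
  then show ?thesis
    by (auto split: prod.splits)
qed

lemma length_hist_cfg:
  "c \<in> set_pmf (cfg P1 f W g n) \<Longrightarrow> length (snd (snd c l)) = n"
proof (induction n arbitrary: c)
  case (Suc n)
  then obtain c0 \<omega> where "c0 \<in> set_pmf (cfg P1 f W g n)" and "\<omega> \<in> set_pmf (step f W g (Suc n) c0)"
    and "c = snd (snd (snd (snd \<omega>)))"
    by (auto split: prod.splits)
  with Suc.IH set_pmf_step_hist[of \<omega> f W g "Suc n" "fst c0" "snd c0"] show ?case
    by (cases c0) auto
qed auto

lemma compress_snoc:
  "compress iota1 iota i (a, zs @ [z]) = iota i (length zs + 2) (compress iota1 iota i (a, zs)) z"
proof -
  have "[1..<length (zs @ [z]) + 1] = [1..<length zs + 1] @ [length zs + 1]"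
    by simp
  then show ?thesis
    by (simp add: compress_def del: upt_Suc)
qed

definition view_step ::
  "'i \<Rightarrow> ('h \<Rightarrow> 'k) \<Rightarrow> 'x \<times> ('i \<Rightarrow> 'h) \<times> 'u \<times> 'r \<times> 'x \<times> ('i \<Rightarrow> 'h)
    \<Rightarrow> ('x \<times> ('i \<Rightarrow> 'h) \<times> 'k) \<times> 'u \<times> 'r \<times> 'x \<times> ('i \<Rightarrow> 'h) \<times> 'k" where
  "view_step i \<kappa> \<omega> = (view_cfg i \<kappa> (fst \<omega>, fst (snd \<omega>)), fst (snd (snd \<omega>)),
     fst (snd (snd (snd \<omega>))), view_cfg i \<kappa> (snd (snd (snd (snd \<omega>)))))"

text \<open>Because the compression is updated recursively, the view after a step is determined by
  the view before it, the action profile and the noise.\<close>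

definition view_transition ::
  "(nat \<Rightarrow> 'x \<Rightarrow> 'u \<Rightarrow> 'w \<Rightarrow> 'x \<times> ('i \<Rightarrow> 'z) \<times> 'r) \<Rightarrow> ('i \<Rightarrow> nat \<Rightarrow> 'k \<Rightarrow> 'z \<Rightarrow> 'k) \<Rightarrow> 'i \<Rightarrow> nat
    \<Rightarrow> 'x \<times> ('i \<Rightarrow> ('h1, 'z) hist) \<times> 'k \<Rightarrow> 'u \<Rightarrow> 'w
    \<Rightarrow> ('x \<times> ('i \<Rightarrow> ('h1, 'z) hist) \<times> 'k) \<times> 'u \<times> 'r \<times> 'x \<times> ('i \<Rightarrow> ('h1, 'z) hist) \<times> 'k" where
  "view_transition f iota i t p u w = (case f t (fst p) u w of (x', z, r) \<Rightarrow>
     (p, u, r, x', restrict (\<lambda>l. (fst (fst (snd p) l), snd (fst (snd p) l) @ [z l])) (- {i}),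
      iota i (t + 1) (snd (snd p)) (z i)))"

lemma view_step_eq_view_transition:
  assumes "f t x u w = (x', z, r)" and "length (snd (h i)) = t - 1" and "1 \<le> t"
  shows "view_step i (compress iota1 iota i) (x, h, u, r, x', \<lambda>l. (fst (h l), snd (h l) @ [z l]))
    = view_transition f iota i t (view_cfg i (compress iota1 iota i) (x, h)) u w"
proof -
  have "compress iota1 iota i (fst (h i), snd (h i) @ [z i]) = iota i (t + 1) (compress iota1 iota i (h i)) (z i)"
    using compress_snoc[of iota1 iota i "fst (h i)" "snd (h i)" "z i"] assms(2,3) by simp
  then show ?thesis
    using assms(1) by (simp add: view_step_def view_transition_def view_cfg_def restrict_def fun_eq_iff)
qed

lemma map_pmf_view_step_stepd_eq_bind:
  assumes "1 \<le> t"
  shows "map_pmf (view_step i (compress iota1 iota i)) (stepd P1 f W g t)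
    = bind_pmf (bind_pmf (config P1 f W g t) (\<lambda>c. map_pmf (Pair (view_cfg i (compress iota1 iota i) c))
          (Pi_pmf UNIV undefined (\<lambda>l. g l t (snd c l)))))
        (\<lambda>(p, u). map_pmf (view_transition f iota i t p u) (W t))"
  unfolding stepd_def map_bind_pmf bind_assoc_pmf bind_map_pmf prod.case
proof (intro bind_pmf_cong refl)
  fix c
  assume "c \<in> set_pmf (config P1 f W g t)"
  then have len: "length (snd (snd c i)) = t - 1"
    by (simp add: config_def length_hist_cfg)
  show "map_pmf (view_step i (compress iota1 iota i)) (step f W g t c)
    = bind_pmf (Pi_pmf UNIV undefined (\<lambda>l. g l t (snd c l)))
        (\<lambda>u. map_pmf (view_transition f iota i t (view_cfg i (compress iota1 iota i) c) u) (W t))"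
  proof (cases c)
    case (Pair x h)
    show ?thesis
      unfolding Pair step_def prod.case map_bind_pmf
      using len[unfolded Pair] view_step_eq_view_transition[OF _ _ \<open>1 \<le> t\<close>]
      by (intro bind_pmf_cong refl)
        (auto simp: map_pmf_def bind_return_pmf intro!: bind_pmf_cong split: prod.split)
  qed
qed

lemma config_Suc:
  assumes "1 \<le> t"
  shows "config P1 f W g (Suc t) = map_pmf (\<lambda>\<omega>. snd (snd (snd (snd \<omega>)))) (stepd P1 f W g t)"
proof -
  obtain n where "t = Suc n"
    using assms by (cases t) auto
  then show ?thesis
    unfolding config_def stepd_def by (simp, intro map_pmf_cong) (auto split: prod.splits)
qed

lemma map_pmf_view_step_stepd_cong:
  assumes usi: "USI P1 f W Uset T iota1 iota i F Phi" and beh: "behavioral Uset T g"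
    and rho: "\<And>t k. rho t k = bind_pmf (F (g i) t k) (g i t)"
    and "1 \<le> t" "t \<le> T"
    and views: "map_pmf (view_cfg i (compress iota1 iota i)) (config P1 f W g t)
      = map_pmf (view_cfg i (compress iota1 iota i))
          (config P1 f W (g(i := \<lambda>t h. rho t (compress iota1 iota i h))) t)"
  shows "map_pmf (view_step i (compress iota1 iota i)) (stepd P1 f W g t)
    = map_pmf (view_step i (compress iota1 iota i))
        (stepd P1 f W (g(i := \<lambda>t h. rho t (compress iota1 iota i h))) t)"
proof -
  define \<kappa> where "\<kappa> = compress iota1 iota i"
  have usi_t: "\<And>k x h. set_pmf (config P1 f W g t) \<inter> {c. \<kappa> (snd c i) = k} \<noteq> {} \<Longrightarrow>
      pmf (cond_pmf (config P1 f W g t) {c. \<kappa> (snd c i) = k}) (x, h)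
        = pmf (F (g i) t k) (h i) * pmf (Phi (restrict g (- {i})) t k) (x, restrict h (- {i}))"
    using usi beh assms(4,5) unfolding USI_def \<kappa>_def by auto
  have upd: "(\<lambda>l. (g(i := \<lambda>t h. rho t (\<kappa> h))) l t (snd c l))
      = (\<lambda>l. ((\<lambda>l. g l t)(i := rho t \<circ> \<kappa>)) l (snd c l))" for c
    by auto
  show ?thesis
    unfolding \<kappa>_def[symmetric] map_pmf_view_step_stepd_eq_bind[of t i iota1 iota, OF \<open>1 \<le> t\<close>, folded \<kappa>_def] upd
    using joint_view_actions_eq[where G = "\<lambda>l. g l t" and R = "rho t", OF usi_t rho views[folded \<kappa>_def]]
    by simp
qed

lemma map_pmf_view_step_stepd_eq:
  assumes usi: "USI P1 f W Uset T iota1 iota i F Phi" and beh: "behavioral Uset T g"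
    and rho: "\<And>t k. rho t k = bind_pmf (F (g i) t k) (g i t)"
    and "1 \<le> t" "t \<le> T"
  shows "map_pmf (view_step i (compress iota1 iota i)) (stepd P1 f W g t)
    = map_pmf (view_step i (compress iota1 iota i))
        (stepd P1 f W (g(i := \<lambda>t h. rho t (compress iota1 iota i h))) t)"
proof -
  let ?\<kappa> = "compress iota1 iota i"
  define g' where "g' = g(i := \<lambda>t h. rho t (?\<kappa> h))"
  have cfg_views: "map_pmf (view_cfg i ?\<kappa>) (config P1 f W g t) = map_pmf (view_cfg i ?\<kappa>) (config P1 f W g' t)"
    if "1 \<le> t" "t \<le> T" for t
    using that
  proof (induction t rule: nat_induct_at_least)
    case base
    show ?case by (simp add: config_def)
  next
    case (Suc t)
    then have "t \<le> T"
      by simp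
    from map_pmf_view_step_stepd_cong[OF usi beh rho Suc.hyps this Suc.IH[OF this, unfolded g'_def]]
    have "map_pmf (\<lambda>q. snd (snd (snd q))) (map_pmf (view_step i ?\<kappa>) (stepd P1 f W g t))
        = map_pmf (\<lambda>q. snd (snd (snd q))) (map_pmf (view_step i ?\<kappa>) (stepd P1 f W g' t))"
      by (simp add: g'_def)
    then show ?case
      using Suc.hyps by (simp add: config_Suc map_pmf_comp view_step_def)
  qed
  from cfg_views[OF assms(4,5)] show ?thesis
    unfolding g'_def by (rule map_pmf_view_step_stepd_cong[OF usi beh rho assms(4,5)])
qed

lemma cond_pmf_vimage_cong:
  assumes "map_pmf \<pi> M = map_pmf \<pi> M'"
    and "set_pmf M \<inter> \<pi> -` B \<noteq> {}" and "set_pmf M' \<inter> \<pi> -` B \<noteq> {}"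
  shows "measure_pmf.prob (cond_pmf M (\<pi> -` B)) (\<pi> -` E)
      = measure_pmf.prob (cond_pmf M' (\<pi> -` B)) (\<pi> -` E)"
    and "measure_pmf.expectation (cond_pmf M (\<pi> -` B)) (\<lambda>\<omega>. \<phi> (\<pi> \<omega>) :: real)
      = measure_pmf.expectation (cond_pmf M' (\<pi> -` B)) (\<lambda>\<omega>. \<phi> (\<pi> \<omega>))"
proof -
  have "map_pmf \<pi> (cond_pmf M (\<pi> -` B)) = map_pmf \<pi> (cond_pmf M' (\<pi> -` B))"
    using assms by (metis cond_map_pmf)
  from arg_cong[OF this, of "\<lambda>N. measure_pmf.prob N E"] arg_cong[OF this, of "\<lambda>N. measure_pmf.expectation N \<phi>"]
  show "measure_pmf.prob (cond_pmf M (\<pi> -` B)) (\<pi> -` E) = measure_pmf.prob (cond_pmf M' (\<pi> -` B)) (\<pi> -` E)"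
    and "measure_pmf.expectation (cond_pmf M (\<pi> -` B)) (\<lambda>\<omega>. \<phi> (\<pi> \<omega>))
      = measure_pmf.expectation (cond_pmf M' (\<pi> -` B)) (\<lambda>\<omega>. \<phi> (\<pi> \<omega>))"
    by simp_all
qed

theorem lemma9:
  fixes P1 :: "('x::finite \<times> ('i::finite \<Rightarrow> 'h1::finite)) pmf"
    and f :: "nat \<Rightarrow> 'x \<Rightarrow> ('i \<Rightarrow> 'u::finite) \<Rightarrow> 'w::finite \<Rightarrow> 'x \<times> ('i \<Rightarrow> 'z::finite) \<times> ('i \<Rightarrow> real)"
    and W :: "nat \<Rightarrow> 'w pmf"
    and Uset :: "'i \<Rightarrow> nat \<Rightarrow> 'u set"
    and act :: "'i \<Rightarrow> nat \<Rightarrow> 'z \<Rightarrow> 'u"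
    and T :: nat
    and iota1 :: "'i \<Rightarrow> 'h1 \<Rightarrow> 'k::finite"
    and iota :: "'i \<Rightarrow> nat \<Rightarrow> 'k \<Rightarrow> 'z \<Rightarrow> 'k"
    and i j :: 'i
    and F :: "(nat \<Rightarrow> ('h1, 'z) hist \<Rightarrow> 'u pmf) \<Rightarrow> nat \<Rightarrow> 'k \<Rightarrow> ('h1, 'z) hist pmf"
    and Phi :: "('i \<Rightarrow> nat \<Rightarrow> ('h1, 'z) hist \<Rightarrow> 'u pmf) \<Rightarrow> nat \<Rightarrow> 'k \<Rightarrow> ('x \<times> ('i \<Rightarrow> ('h1, 'z) hist)) pmf"
    and g :: "'i \<Rightarrow> nat \<Rightarrow> ('h1, 'z) hist \<Rightarrow> 'u pmf"
    and rho :: "nat \<Rightarrow> 'k \<Rightarrow> 'u pmf"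
  assumes reward_bound: "\<And>t x u w l. \<bar>snd (snd (f t x u w)) l\<bar> \<le> 1"
    and action_in_info: "\<And>t x u w l. act l t (fst (snd (f t x u w)) l) = u l"
    and usi: "USI P1 f W Uset T iota1 iota i F Phi"
    and mixed: "fully_mixed Uset T g"
    and rho_def: "\<And>t k. rho t k = bind_pmf (F (g i) t k) (\<lambda>h. g i t h)"
    and ji: "j \<noteq> i"
  shows "(\<forall>t h u h'.
            1 \<le> t \<and> t < T \<and> h \<in> Hset t \<and> u \<in> Uset j t \<and>
            set_pmf (stepd P1 f W g t) \<inter> {\<omega>. fst (snd \<omega>) j = h \<and> fst (snd (snd \<omega>)) j = u} \<noteq> {} \<and>
            set_pmf (stepd P1 f W (g(i := (\<lambda>t h. rho t (compress iota1 iota i h)))) t)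
               \<inter> {\<omega>. fst (snd \<omega>) j = h \<and> fst (snd (snd \<omega>)) j = u} \<noteq> {}
            \<longrightarrow>
            measure_pmf.prob
              (cond_pmf (stepd P1 f W g t) {\<omega>. fst (snd \<omega>) j = h \<and> fst (snd (snd \<omega>)) j = u})
              {\<omega>. snd (snd (snd (snd (snd \<omega>)))) j = h'}
            = measure_pmf.prob
              (cond_pmf (stepd P1 f W (g(i := (\<lambda>t h. rho t (compress iota1 iota i h)))) t)
                 {\<omega>. fst (snd \<omega>) j = h \<and> fst (snd (snd \<omega>)) j = u})
              {\<omega>. snd (snd (snd (snd (snd \<omega>)))) j = h'})
       \<and> (\<forall>t h u.
            1 \<le> t \<and> t \<le> T \<and> h \<in> Hset t \<and> u \<in> Uset j t \<and>
            set_pmf (stepd P1 f W g t) \<inter> {\<omega>. fst (snd \<omega>) j = h \<and> fst (snd (snd \<omega>)) j = u} \<noteq> {} \<and>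
            set_pmf (stepd P1 f W (g(i := (\<lambda>t h. rho t (compress iota1 iota i h)))) t)
               \<inter> {\<omega>. fst (snd \<omega>) j = h \<and> fst (snd (snd \<omega>)) j = u} \<noteq> {}
            \<longrightarrow>
            measure_pmf.expectation
              (cond_pmf (stepd P1 f W g t) {\<omega>. fst (snd \<omega>) j = h \<and> fst (snd (snd \<omega>)) j = u})
              (\<lambda>\<omega>. fst (snd (snd (snd \<omega>))) j)
            = measure_pmf.expectation
              (cond_pmf (stepd P1 f W (g(i := (\<lambda>t h. rho t (compress iota1 iota i h)))) t)
                 {\<omega>. fst (snd \<omega>) j = h \<and> fst (snd (snd \<omega>)) j = u})
              (\<lambda>\<omega>. fst (snd (snd (snd \<omega>))) j))"
proof -
  let ?g' = "g(i := \<lambda>t h. rho t (compress iota1 iota i h))"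
  let ?\<pi> = "view_step i (compress iota1 iota i)"
  \<comment> \<open>Full mixedness enters only through behaviourality.\<close>
  have beh: "behavioral Uset T g"
    using mixed by (simp add: fully_mixed_def)
  have views: "map_pmf ?\<pi> (stepd P1 f W g t) = map_pmf ?\<pi> (stepd P1 f W ?g' t)"
    if "1 \<le> t" "t \<le> T" for t
    using map_pmf_view_step_stepd_eq[OF usi beh rho_def that] .
  have observed: "{\<omega>. fst (snd \<omega>) j = h \<and> fst (snd (snd \<omega>)) j = u}
      = ?\<pi> -` {q. fst (snd (fst q)) j = h \<and> fst (snd q) j = u}" for h u
    using ji by (auto simp: view_step_def view_cfg_def)
  have next_hist: "{\<omega>. snd (snd (snd (snd (snd \<omega>)))) j = h'}
      = ?\<pi> -` {q. fst (snd (snd (snd (snd q)))) j = h'}" for h'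
    using ji by (auto simp: view_step_def view_cfg_def)
  have reward: "(\<lambda>\<omega>. fst (snd (snd (snd \<omega>))) j) = (\<lambda>\<omega>. fst (snd (snd (?\<pi> \<omega>))) j)"
    by (simp add: view_step_def)
  show ?thesis
    unfolding observed next_hist reward
    by (intro conjI allI impI cond_pmf_vimage_cong[OF views]) auto
qed

end
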